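(* Let $G=(V,E)$ be a finite, simple, connected reflective graph. Let $x,x'\in V$ with $d(x,x')=n-1$ for some integer $n\geq 1$, and assume the subgraph induced on $S_1(x)$ is connected. Then $S_1(x)\cap S_n(x')$ is isometric.
   Context: $d$ is the combinatorial distance, $S_n(x)=\{v:d(v,x)=n\}$. For adjacent $x\sim y$ let $V_x^y=\{v: d(v,x)<d(v,y)\}$, $V^{xy}=\{v:d(v,x)=d(v,y)\}$. A reflection from $x$ to $y$ is a graph automorphism $\phi$ with $\phi\circ\phi=\mathrm{id}$, $\phi(x)=y$, such that the edges between $V_x^y$ and $V_y^x$ are exactly $\{\{x',\phi(x')\}:x'\in V_x^y\}$ and $\phi$ fixes $V^{xy}$ pointwise. A graph is reflective if every edge admits a reflection. A set $W\subseteq V$ is isometric if for all $w,w'\in W$ there is a shortest path in $G$ from $w$ to $w'$ all of whose vertices lie in $W$. *)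

theory Defs
  imports Main
begin

definition simple_graph :: "'a set \<Rightarrow> ('a \<Rightarrow> 'a \<Rightarrow> bool) \<Rightarrow> bool" where
  "simple_graph V E \<longleftrightarrow> finite V \<and> (\<forall>a b. E a b \<longrightarrow> a \<in> V \<and> b \<in> V)
     \<and> (\<forall>a b. E a b \<longrightarrow> E b a) \<and> (\<forall>a. \<not> E a a)"

definition walk_betw :: "('a \<Rightarrow> 'a \<Rightarrow> bool) \<Rightarrow> 'a list \<Rightarrow> 'a \<Rightarrow> 'a \<Rightarrow> bool" where
  "walk_betw E p a b \<longleftrightarrow> p \<noteq> [] \<and> hd p = a \<and> last p = b \<and> successively E p"

definition connected_graph :: "'a set \<Rightarrow> ('a \<Rightarrow> 'a \<Rightarrow> bool) \<Rightarrow> bool" where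
  "connected_graph V E \<longleftrightarrow> (\<forall>a\<in>V. \<forall>b\<in>V. \<exists>p. walk_betw E p a b)"

definition dist :: "('a \<Rightarrow> 'a \<Rightarrow> bool) \<Rightarrow> 'a \<Rightarrow> 'a \<Rightarrow> nat" where
  "dist E a b = (LEAST n. \<exists>p. walk_betw E p a b \<and> length p = Suc n)"

definition sphere :: "'a set \<Rightarrow> ('a \<Rightarrow> 'a \<Rightarrow> bool) \<Rightarrow> nat \<Rightarrow> 'a \<Rightarrow> 'a set" where
  "sphere V E n x = {v \<in> V. dist E v x = n}"

definition half :: "'a set \<Rightarrow> ('a \<Rightarrow> 'a \<Rightarrow> bool) \<Rightarrow> 'a \<Rightarrow> 'a \<Rightarrow> 'a set" where
  "half V E x y = {v \<in> V. dist E v x < dist E v y}"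

definition mid :: "'a set \<Rightarrow> ('a \<Rightarrow> 'a \<Rightarrow> bool) \<Rightarrow> 'a \<Rightarrow> 'a \<Rightarrow> 'a set" where
  "mid V E x y = {v \<in> V. dist E v x = dist E v y}"

definition automorphism :: "'a set \<Rightarrow> ('a \<Rightarrow> 'a \<Rightarrow> bool) \<Rightarrow> ('a \<Rightarrow> 'a) \<Rightarrow> bool" where
  "automorphism V E \<phi> \<longleftrightarrow> bij_betw \<phi> V V \<and> (\<forall>a\<in>V. \<forall>b\<in>V. E a b \<longleftrightarrow> E (\<phi> a) (\<phi> b))"

text \<open>Reflection from x to y (functions considered on V only). The edges between the
  two halves, oriented from V_x^y to V_y^x, are exactly the pairs (x', phi x').\<close>
definition reflection :: "'a set \<Rightarrow> ('a \<Rightarrow> 'a \<Rightarrow> bool) \<Rightarrow> 'a \<Rightarrow> 'a \<Rightarrow> ('a \<Rightarrow> 'a) \<Rightarrow> bool" where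
  "reflection V E x y \<phi> \<longleftrightarrow> automorphism V E \<phi> \<and> (\<forall>v\<in>V. \<phi> (\<phi> v) = v) \<and> \<phi> x = y
     \<and> {(a, b). a \<in> half V E x y \<and> b \<in> half V E y x \<and> E a b} = {(a, \<phi> a) | a. a \<in> half V E x y}
     \<and> (\<forall>v\<in>mid V E x y. \<phi> v = v)"

definition reflective :: "'a set \<Rightarrow> ('a \<Rightarrow> 'a \<Rightarrow> bool) \<Rightarrow> bool" where
  "reflective V E \<longleftrightarrow> (\<forall>x y. E x y \<longrightarrow> (\<exists>\<phi>. reflection V E x y \<phi>))"

definition induced_connected :: "('a \<Rightarrow> 'a \<Rightarrow> bool) \<Rightarrow> 'a set \<Rightarrow> bool" where
  "induced_connected E W \<longleftrightarrow> (\<forall>a\<in>W. \<forall>b\<in>W. \<exists>p. walk_betw E p a b \<and> set p \<subseteq> W)"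

definition isometric :: "('a \<Rightarrow> 'a \<Rightarrow> bool) \<Rightarrow> 'a set \<Rightarrow> bool" where
  "isometric E W \<longleftrightarrow> (\<forall>w\<in>W. \<forall>w'\<in>W. \<exists>p. walk_betw E p w w' \<and> length p = Suc (dist E w w') \<and> set p \<subseteq> W)"

end

theory Submission
  imports Defs
begin

text \<open>
  Two distinct non-adjacent vertices \<open>w, v\<close> of the connected link \<open>S\<^sub>1(x)\<close> have a common
  neighbour in the link. Walk from \<open>w\<close> to \<open>v\<close> inside the link: if the current vertex \<open>u\<close> is
  joined to \<open>w\<close> through a common neighbour \<open>m\<close> and the next vertex \<open>v'\<close> is not within
  distance 2 of \<open>w\<close> via \<open>m\<close>, then the reflection from \<open>m\<close> to \<open>w\<close> fixes \<open>x\<close> and \<open>v'\<close> (both are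
  equidistant from \<open>m\<close> and \<open>w\<close>) and maps \<open>u\<close> to a common neighbour of \<open>w\<close> and \<open>v'\<close> in the link.

  Now let \<open>w, v \<in> S\<^sub>1(x) \<inter> S\<^sub>n(x')\<close> be distinct and non-adjacent, with common neighbour
  \<open>m \<in> S\<^sub>1(x)\<close>. As \<open>d(x, x') = n - 1\<close>, every vertex of \<open>S\<^sub>1(x)\<close> is within distance \<open>n\<close> of \<open>x'\<close>.
  If \<open>m\<close> is strictly closer to \<open>x'\<close>, then \<open>x'\<close> and \<open>v\<close> lie on the side of \<open>m\<close> for the
  reflection \<open>\<mu>\<close> from \<open>m\<close> to \<open>w\<close>, so \<open>\<mu> v\<close> is no closer to \<open>x'\<close> than \<open>v\<close>; since \<open>\<mu>\<close> fixes \<open>x\<close>,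
  the vertex \<open>\<mu> v\<close> is a common neighbour of \<open>w\<close> and \<open>v\<close> in \<open>S\<^sub>1(x) \<inter> S\<^sub>n(x')\<close>. Hence any two
  vertices of this set are joined inside it by a geodesic of length at most 2.
\<close>

lemma dist_less_length_walk:
  assumes "walk_betw E p a b"
  shows "dist E a b < length p"
proof -
  have "length p = Suc (length p - 1)"
    using assms by (cases p) (auto simp: walk_betw_def)
  then have "dist E a b \<le> length p - 1"
    unfolding dist_def by (metis (mono_tags, lifting) Least_le assms)
  then show ?thesis
    using \<open>length p = Suc (length p - 1)\<close> by linarith
qed

lemma dist_self [simp]: "dist E a a = 0"
  using dist_less_length_walk[of E "[a]" a a] by (simp add: walk_betw_def)

lemma walk_betw_induct:
  assumes "walk_betw E p a b" "set p \<subseteq> W" "P a"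
    and step: "\<And>u v. u \<in> W \<Longrightarrow> v \<in> W \<Longrightarrow> E u v \<Longrightarrow> P u \<Longrightarrow> P v"
  shows "P b"
  using assms(1-3)
proof (induction p arbitrary: a)
  case Nil
  then show ?case by (simp add: walk_betw_def)
next
  case (Cons u p)
  show ?case
  proof (cases p)
    case Nil
    with Cons.prems show ?thesis
      by (auto simp: walk_betw_def)
  next
    case (Cons u' p')
    with Cons.prems(1) have "u = a" "E a u'" "walk_betw E p u' b"
      by (auto simp: walk_betw_def)
    moreover have "a \<in> W" "u' \<in> W" "set p \<subseteq> W"
      using Cons.prems(2) \<open>u = a\<close> \<open>p = u' # p'\<close> by auto
    ultimately show ?thesis
      using Cons.IH step Cons.prems(3) by blast
  qed
qed

lemma induced_connected_induct:
  assumes "induced_connected E W" "a \<in> W" "b \<in> W" "P a"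
    and "\<And>u v. u \<in> W \<Longrightarrow> v \<in> W \<Longrightarrow> E u v \<Longrightarrow> P u \<Longrightarrow> P v"
  shows "P b"
proof -
  obtain p where "walk_betw E p a b" "set p \<subseteq> W"
    using assms(1-3) unfolding induced_connected_def by blast
  then show ?thesis
    using assms(4,5) by (rule walk_betw_induct)
qed

lemma automorphism_in_V: "automorphism V E \<phi> \<Longrightarrow> a \<in> V \<Longrightarrow> \<phi> a \<in> V"
  unfolding automorphism_def by (blast dest: bij_betw_apply)

lemma automorphism_inv_into:
  assumes "automorphism V E \<phi>"
  shows "automorphism V E (inv_into V \<phi>)"
proof -
  have bij: "bij_betw \<phi> V V" and edges: "\<forall>a\<in>V. \<forall>b\<in>V. E a b \<longleftrightarrow> E (\<phi> a) (\<phi> b)"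
    using assms unfolding automorphism_def by blast+
  have "E a b \<longleftrightarrow> E (inv_into V \<phi> a) (inv_into V \<phi> b)" if "a \<in> V" "b \<in> V" for a b
  proof -
    have "inv_into V \<phi> a \<in> V" "inv_into V \<phi> b \<in> V"
      using bij_betw_apply[OF bij_betw_inv_into[OF bij]] that by blast+
    with edges have "E (inv_into V \<phi> a) (inv_into V \<phi> b) \<longleftrightarrow>
        E (\<phi> (inv_into V \<phi> a)) (\<phi> (inv_into V \<phi> b))"
      by blast
    then show ?thesis
      using bij_betw_inv_into_right[OF bij] that by simp
  qed
  with bij_betw_inv_into[OF bij] show ?thesis
    unfolding automorphism_def by blast
qed

lemma reflection_automorphism: "reflection V E y z \<phi> \<Longrightarrow> automorphism V E \<phi>"
  unfolding reflection_def by blast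

lemma reflection_fixes_mid: "reflection V E y z \<phi> \<Longrightarrow> v \<in> mid V E y z \<Longrightarrow> \<phi> v = v"
  unfolding reflection_def by blast

lemma reflection_swaps: "reflection V E y z \<phi> \<Longrightarrow> \<phi> y = z"
  unfolding reflection_def by blast

lemma reflection_half_edge:
  assumes "reflection V E y z \<phi>" "a \<in> half V E y z"
  shows "E a (\<phi> a)" "\<phi> a \<in> half V E z y"
proof -
  have "(a, \<phi> a) \<in> {(a, b). a \<in> half V E y z \<and> b \<in> half V E z y \<and> E a b}"
    using assms unfolding reflection_def by blast
  then show "E a (\<phi> a)" "\<phi> a \<in> half V E z y"
    by simp_all
qed

lemma reflection_half_edge_unique:
  assumes "reflection V E y z \<phi>" "a \<in> half V E y z" "b \<in> half V E z y" "E a b"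
  shows "b = \<phi> a"
proof -
  have "(a, b) \<in> {(a, \<phi> a) | a. a \<in> half V E y z}"
    using assms unfolding reflection_def by blast
  then show ?thesis
    by blast
qed

locale connected_simple_graph =
  fixes V :: "'a set" and E :: "'a \<Rightarrow> 'a \<Rightarrow> bool"
  assumes simple: "simple_graph V E" and connected: "connected_graph V E"
begin

lemma edge_sym: "E a b \<Longrightarrow> E b a"
  using simple unfolding simple_graph_def by blast

lemma edge_vertices: "E a b \<Longrightarrow> a \<in> V" "E a b \<Longrightarrow> b \<in> V"
  using simple unfolding simple_graph_def by blast+

lemma edge_irrefl: "\<not> E a a"
  using simple unfolding simple_graph_def by blast

lemma walk_betw_rev:
  assumes "walk_betw E p a b"
  shows "walk_betw E (rev p) b a"
proof -
  have "successively (\<lambda>u v. E v u) p"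
    using assms unfolding walk_betw_def by (blast intro: successively_mono edge_sym)
  with assms show ?thesis
    by (simp add: walk_betw_def hd_rev last_rev successively_rev)
qed

lemma dist_commute: "dist E a b = dist E b a"
proof -
  have rev: "\<exists>q. walk_betw E q b a \<and> length q = Suc n"
    if "walk_betw E p a b" "length p = Suc n" for a b p n
    using that walk_betw_rev by (intro exI[of _ "rev p"]) simp
  show ?thesis
    unfolding dist_def by (rule arg_cong[where f = Least], rule ext) (blast intro: rev)
qed

lemma shortest_walkE:
  assumes "a \<in> V" "b \<in> V"
  obtains p where "walk_betw E p a b" "length p = Suc (dist E a b)"
proof -
  obtain p where p: "walk_betw E p a b"
    using connected assms unfolding connected_graph_def by blast
  then have "length p = Suc (length p - 1)"
    by (cases p) (auto simp: walk_betw_def)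
  with p have "\<exists>n q. walk_betw E q a b \<and> length q = Suc n"
    by blast
  then have "\<exists>q. walk_betw E q a b \<and> length q = Suc (dist E a b)"
    unfolding dist_def by (rule LeastI_ex)
  with that show ?thesis
    by blast
qed

lemma dist_triangle_edge:
  assumes "E a b" "c \<in> V"
  shows "dist E a c \<le> Suc (dist E b c)"
proof -
  obtain q where q: "walk_betw E q b c" "length q = Suc (dist E b c)"
    using shortest_walkE[OF edge_vertices(2)[OF assms(1)] assms(2)] .
  then have "walk_betw E (a # q) a c"
    using assms(1) by (cases q) (auto simp: walk_betw_def)
  from dist_less_length_walk[OF this] q(2) show ?thesis
    by simp
qed

lemma dist_eq_0_iff:
  assumes "a \<in> V" "b \<in> V"
  shows "dist E a b = 0 \<longleftrightarrow> a = b"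
proof
  assume "dist E a b = 0"
  then obtain p where "walk_betw E p a b" "length p = 1"
    using shortest_walkE[OF assms] by auto
  then show "a = b"
    by (cases p) (auto simp: walk_betw_def)
qed simp

lemma dist_eq_1_iff:
  assumes "a \<in> V" "b \<in> V"
  shows "dist E a b = 1 \<longleftrightarrow> E a b"
proof
  assume "dist E a b = 1"
  then obtain p where p: "walk_betw E p a b" "length p = Suc (Suc 0)"
    using shortest_walkE[OF assms] by auto
  then show "E a b"
    by (auto simp: walk_betw_def length_Suc_conv)
next
  assume "E a b"
  then have "walk_betw E [a, b] a b"
    by (simp add: walk_betw_def)
  from dist_less_length_walk[OF this] have "dist E a b \<le> 1"
    by simp
  moreover have "a \<noteq> b"
    using \<open>E a b\<close> edge_irrefl by blast
  ultimately show "dist E a b = 1"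
    using dist_eq_0_iff[OF assms] by linarith
qed

lemma dist_eq_2I:
  assumes "E a c" "E c b" "a \<noteq> b" "\<not> E a b"
  shows "dist E a b = 2"
proof -
  have V: "a \<in> V" "b \<in> V" "c \<in> V"
    using assms(1,2) edge_vertices by blast+
  have "dist E c b = 1"
    using dist_eq_1_iff[OF V(3,2)] assms(2) by blast
  then have "dist E a b \<le> 2"
    using dist_triangle_edge[OF assms(1) V(2)] by simp
  moreover have "dist E a b \<noteq> 0" "dist E a b \<noteq> 1"
    using dist_eq_0_iff[OF V(1,2)] dist_eq_1_iff[OF V(1,2)] assms(3,4) by blast+
  ultimately show ?thesis
    by linarith
qed

lemma dist_SucE:
  assumes "a \<in> V" "c \<in> V" "dist E a c = Suc k"
  obtains a' where "E a a'" "dist E a' c = k"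
proof -
  obtain p where p: "walk_betw E p a c" "length p = Suc (Suc k)"
    using shortest_walkE[OF assms(1,2)] assms(3) by auto
  then obtain a' q where "p = a # a' # q"
    by (auto simp: walk_betw_def length_Suc_conv)
  with p have "E a a'" "walk_betw E (a' # q) a' c"
    by (auto simp: walk_betw_def)
  have "dist E a' c \<le> k"
    using dist_less_length_walk[OF \<open>walk_betw E (a' # q) a' c\<close>] p(2) \<open>p = a # a' # q\<close> by simp
  moreover have "k \<le> dist E a' c"
    using dist_triangle_edge[OF \<open>E a a'\<close> assms(2)] assms(3) by simp
  ultimately show ?thesis
    using that \<open>E a a'\<close> by simp
qed

lemma isometricI_common_neighbour:
  assumes "W \<subseteq> V"
    and "\<And>w v. w \<in> W \<Longrightarrow> v \<in> W \<Longrightarrow> w \<noteq> v \<Longrightarrow> \<not> E w v \<Longrightarrow> \<exists>m\<in>W. E w m \<and> E m v"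
  shows "isometric E W"
  unfolding isometric_def
proof (intro ballI)
  fix w v
  assume wv: "w \<in> W" "v \<in> W"
  consider "w = v" | "E w v" | "w \<noteq> v" "\<not> E w v"
    by blast
  then show "\<exists>p. walk_betw E p w v \<and> length p = Suc (dist E w v) \<and> set p \<subseteq> W"
  proof cases
    case 1
    with wv show ?thesis
      by (intro exI[of _ "[w]"]) (simp add: walk_betw_def)
  next
    case 2
    moreover have "dist E w v = 1"
      using 2 wv assms(1) dist_eq_1_iff by blast
    ultimately show ?thesis
      using wv by (intro exI[of _ "[w, v]"]) (simp add: walk_betw_def)
  next
    case 3
    then obtain m where "m \<in> W" "E w m" "E m v"
      using assms(2) wv by blast
    moreover have "dist E w v = 2"
      using dist_eq_2I 3 \<open>E w m\<close> \<open>E m v\<close> by blast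
    ultimately show ?thesis
      using wv by (intro exI[of _ "[w, m, v]"]) (simp add: walk_betw_def)
  qed
qed

lemma automorphism_edge: "automorphism V E \<phi> \<Longrightarrow> E a b \<Longrightarrow> E (\<phi> a) (\<phi> b)"
  unfolding automorphism_def using edge_vertices by blast

lemma automorphism_dist_le:
  assumes "automorphism V E \<phi>" "a \<in> V" "b \<in> V"
  shows "dist E (\<phi> a) (\<phi> b) \<le> dist E a b"
proof -
  obtain p where p: "walk_betw E p a b" "length p = Suc (dist E a b)"
    using shortest_walkE[OF assms(2,3)] .
  have "successively E p"
    using p(1) unfolding walk_betw_def by blast
  then have "successively E (map \<phi> p)"
    unfolding successively_map by (rule successively_mono) (rule automorphism_edge[OF assms(1)])
  with p(1) have "walk_betw E (map \<phi> p) (\<phi> a) (\<phi> b)"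
    by (simp add: walk_betw_def hd_map last_map)
  from dist_less_length_walk[OF this] p(2) show ?thesis
    by simp
qed

lemma automorphism_dist:
  assumes "automorphism V E \<phi>" "a \<in> V" "b \<in> V"
  shows "dist E (\<phi> a) (\<phi> b) = dist E a b"
proof -
  let ?\<psi> = "inv_into V \<phi>"
  have "bij_betw \<phi> V V"
    using assms(1) unfolding automorphism_def by blast
  then have "?\<psi> (\<phi> a) = a" "?\<psi> (\<phi> b) = b"
    using assms(2,3) bij_betw_inv_into_left by metis+
  then have "dist E a b \<le> dist E (\<phi> a) (\<phi> b)"
    using automorphism_dist_le[OF automorphism_inv_into[OF assms(1)]]
      automorphism_in_V[OF assms(1)] assms(2,3) by metis
  with automorphism_dist_le[OF assms] show ?thesis
    by simp
qed

lemma reflection_dist_same_half: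
  assumes \<phi>: "reflection V E y z \<phi>" and "a \<in> half V E y z" "b \<in> half V E y z"
  shows "dist E a b \<le> dist E a (\<phi> b)"
proof -
  have aut: "automorphism V E \<phi>"
    using reflection_automorphism[OF \<phi>] .
  have bV: "b \<in> V"
    using assms(3) unfolding half_def by blast
  have \<phi>b: "\<phi> b \<in> half V E z y"
    using reflection_half_edge(2)[OF \<phi> assms(3)] .
  then have \<phi>bV: "\<phi> b \<in> V"
    unfolding half_def by blast
  \<comment> \<open>The first step of a shortest path from \<open>a\<close> to \<open>\<phi> b\<close> stays in the half of \<open>y\<close>,
    or lands on a vertex fixed by \<open>\<phi>\<close>, or crosses the unique edge to \<open>\<phi> a\<close>.\<close>
  have "dist E a b \<le> k" if "a \<in> half V E y z" "dist E a (\<phi> b) = k" for a k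
    using that
  proof (induction k arbitrary: a)
    case 0
    then have "a = \<phi> b"
      using dist_eq_0_iff \<phi>bV unfolding half_def by blast
    with 0 \<phi>b show ?case
      unfolding half_def by simp
  next
    case (Suc k)
    have aV: "a \<in> V"
      using Suc.prems(1) unfolding half_def by blast
    obtain a' where a': "E a a'" "dist E a' (\<phi> b) = k"
      using dist_SucE[OF aV \<phi>bV Suc.prems(2)] .
    have a'V: "a' \<in> V"
      using edge_vertices(2)[OF a'(1)] .
    consider "a' \<in> half V E y z" | "a' \<in> mid V E y z" | "a' \<in> half V E z y"
      using a'V unfolding half_def mid_def by fastforce
    then show ?case
    proof cases
      case 1
      then have "dist E a' b \<le> k"
        using Suc.IH a'(2) by blast
      then show ?thesis
        using dist_triangle_edge[OF a'(1) bV] by simp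
    next
      case 2
      then have "dist E a' b = k"
        using a'(2) automorphism_dist[OF aut a'V bV] reflection_fixes_mid[OF \<phi>] by simp
      then show ?thesis
        using dist_triangle_edge[OF a'(1) bV] by simp
    next
      case 3
      then have "a' = \<phi> a"
        using reflection_half_edge_unique[OF \<phi> Suc.prems(1) _ a'(1)] by blast
      then show ?thesis
        using a'(2) automorphism_dist[OF aut aV bV] by simp
    qed
  qed
  with assms(2) show ?thesis
    by blast
qed

lemma sphere_1_iff: "x \<in> V \<Longrightarrow> a \<in> sphere V E 1 x \<longleftrightarrow> E a x"
  unfolding sphere_def using dist_eq_1_iff edge_vertices(1) by blast

lemma sphere_1_center_mid:
  assumes "x \<in> V" "a \<in> sphere V E 1 x" "b \<in> sphere V E 1 x"
  shows "x \<in> mid V E a b"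
  using assms dist_commute unfolding sphere_def mid_def by simp

end

locale reflective_graph = connected_simple_graph +
  assumes reflective: "reflective V E"
begin

lemma reflectionE:
  assumes "E y z"
  obtains \<phi> where "reflection V E y z \<phi>"
  using reflective assms unfolding reflective_def by blast

lemma sphere_1_common_neighbour_shift:
  assumes x: "x \<in> V"
    and S: "w \<in> sphere V E 1 x" "m \<in> sphere V E 1 x" "u \<in> sphere V E 1 x" "v \<in> sphere V E 1 x"
    and edges: "E w m" "E m u" "E u v"
    and "v \<noteq> w" "\<not> E w v" "\<not> E m v"
  shows "\<exists>m'\<in>sphere V E 1 x. E w m' \<and> E m' v"
proof -
  obtain \<mu> where \<mu>: "reflection V E m w \<mu>"
    using reflectionE edge_sym[OF edges(1)] by blast
  have aut: "automorphism V E \<mu>"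
    using reflection_automorphism[OF \<mu>] .
  have to_x: "E w x" "E m x" "E u x" "E v x"
    using S sphere_1_iff[OF x] by blast+
  have "v \<noteq> m"
    using edges(1) \<open>\<not> E w v\<close> by blast
  have "dist E v m = 2" "dist E v w = 2"
    using dist_eq_2I[OF to_x(4) edge_sym[OF to_x(2)]] dist_eq_2I[OF to_x(4) edge_sym[OF to_x(1)]]
      \<open>v \<noteq> m\<close> \<open>v \<noteq> w\<close> \<open>\<not> E w v\<close> \<open>\<not> E m v\<close> edge_sym by blast+
  then have "v \<in> mid V E m w"
    using edge_vertices(1)[OF to_x(4)] unfolding mid_def by simp
  then have "\<mu> v = v" "\<mu> x = x" "\<mu> m = w"
    using reflection_fixes_mid[OF \<mu>] sphere_1_center_mid[OF x S(2,1)] reflection_swaps[OF \<mu>] by blast+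
  then have "E w (\<mu> u)" "E (\<mu> u) x" "E (\<mu> u) v"
    using automorphism_edge[OF aut] edges(2,3) to_x(3) by metis+
  moreover have "\<mu> u \<in> sphere V E 1 x"
    using sphere_1_iff[OF x] \<open>E (\<mu> u) x\<close> by blast
  ultimately show ?thesis
    by blast
qed

lemma sphere_1_common_neighbour:
  assumes x: "x \<in> V" and conn: "induced_connected E (sphere V E 1 x)"
    and S: "w \<in> sphere V E 1 x" "v \<in> sphere V E 1 x"
    and "w \<noteq> v" "\<not> E w v"
  shows "\<exists>m\<in>sphere V E 1 x. E w m \<and> E m v"
proof -
  let ?S = "sphere V E 1 x"
  let ?near = "\<lambda>u. u = w \<or> E w u \<or> (\<exists>m\<in>?S. E w m \<and> E m u)"
  have "?near v"
  proof (rule induced_connected_induct[OF conn S])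
    show "?near w"
      by simp
  next
    fix a b
    assume "a \<in> ?S" "b \<in> ?S" "E a b" "?near a"
    then consider "a = w" | "E w a" | m where "m \<in> ?S" "E w m" "E m a" "a \<noteq> w" "\<not> E w a"
      by blast
    then show "?near b"
    proof cases
      case (3 m)
      show ?thesis
      proof (cases "b = w \<or> E w b \<or> E m b")
        case True
        with 3 show ?thesis
          by blast
      next
        case False
        with sphere_1_common_neighbour_shift[OF x S(1) \<open>m \<in> ?S\<close> \<open>a \<in> ?S\<close> \<open>b \<in> ?S\<close>]
          3 \<open>E a b\<close> show ?thesis
          by blast
      qed
    qed (use \<open>a \<in> ?S\<close> \<open>E a b\<close> in blast)+
  qed
  with assms(5,6) show ?thesis
    by blast
qed

lemma sphere_1_inter_sphere_common_neighbour:
  assumes x: "x \<in> V" and x': "x' \<in> V" and "dist E x x' < n"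
    and conn: "induced_connected E (sphere V E 1 x)"
    and w: "w \<in> sphere V E 1 x \<inter> sphere V E n x'" and v: "v \<in> sphere V E 1 x \<inter> sphere V E n x'"
    and "w \<noteq> v" "\<not> E w v"
  shows "\<exists>m\<in>sphere V E 1 x \<inter> sphere V E n x'. E w m \<and> E m v"
proof -
  have near: "dist E u x' \<le> n" if "u \<in> sphere V E 1 x" for u
    using dist_triangle_edge[OF _ x'] sphere_1_iff[OF x] that \<open>dist E x x' < n\<close>
    by (metis Suc_leI le_trans)
  have "w \<in> V" "v \<in> V" "dist E w x' = n" "dist E v x' = n"
    using w v unfolding sphere_def by blast+
  obtain m where m: "m \<in> sphere V E 1 x" "E w m" "E m v"
    using sphere_1_common_neighbour[OF x conn] w v assms(7,8) by blast
  show ?thesis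
  proof (cases "dist E m x' = n")
    case True
    with m show ?thesis
      unfolding sphere_def by blast
  next
    case False
    with near[OF m(1)] have "dist E x' m < dist E x' w"
      using \<open>dist E w x' = n\<close> dist_commute by simp
    then have x'_half: "x' \<in> half V E m w"
      using x' unfolding half_def by simp
    obtain \<mu> where \<mu>: "reflection V E m w \<mu>"
      using reflectionE edge_sym[OF m(2)] by blast
    have "dist E v m = 1" "dist E v w = 2"
      using dist_eq_1_iff edge_sym[OF m(3)] dist_eq_2I[OF edge_sym[OF m(3)] edge_sym[OF m(2)]]
        assms(7,8) edge_vertices edge_sym by metis+
    then have v_half: "v \<in> half V E m w"
      using \<open>v \<in> V\<close> unfolding half_def by simp
    have "\<mu> x = x" "\<mu> m = w"
      using reflection_fixes_mid[OF \<mu> sphere_1_center_mid[OF x m(1)]] w reflection_swaps[OF \<mu>]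
      by blast+
    have "n \<le> dist E (\<mu> v) x'"
      using reflection_dist_same_half[OF \<mu> x'_half v_half] \<open>dist E v x' = n\<close> dist_commute by simp
    moreover have "\<mu> v \<in> sphere V E 1 x"
    proof -
      have "E v x"
        using v sphere_1_iff[OF x] by blast
      from automorphism_edge[OF reflection_automorphism[OF \<mu>] this] show ?thesis
        using sphere_1_iff[OF x] \<open>\<mu> x = x\<close> by simp
    qed
    ultimately have "\<mu> v \<in> sphere V E 1 x \<inter> sphere V E n x'"
      using near unfolding sphere_def by fastforce
    moreover have "E w (\<mu> v)" "E (\<mu> v) v"
      using automorphism_edge[OF reflection_automorphism[OF \<mu>] m(3)] \<open>\<mu> m = w\<close>
        reflection_half_edge(1)[OF \<mu> v_half] edge_sym by auto
    ultimately show ?thesis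
      by blast
  qed
qed

end

theorem lemma2p11:
  fixes V :: "'a set" and E :: "'a \<Rightarrow> 'a \<Rightarrow> bool" and x x' :: 'a and n :: nat
  assumes "simple_graph V E" and "connected_graph V E" and "reflective V E"
    and "x \<in> V" and "x' \<in> V" and "n \<ge> 1" and "dist E x x' = n - 1"
    and "induced_connected E (sphere V E 1 x)"
  shows "isometric E (sphere V E 1 x \<inter> sphere V E n x')"
proof -
  interpret reflective_graph V E
    using assms(1-3) by unfold_locales
  have "dist E x x' < n"
    using assms(6,7) by linarith
  show ?thesis
  proof (rule isometricI_common_neighbour)
    show "sphere V E 1 x \<inter> sphere V E n x' \<subseteq> V"
      unfolding sphere_def by blast
  next
    fix w v
    assume "w \<in> sphere V E 1 x \<inter> sphere V E n x'" "v \<in> sphere V E 1 x \<inter> sphere V E n x'"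
      "w \<noteq> v" "\<not> E w v"
    then show "\<exists>m\<in>sphere V E 1 x \<inter> sphere V E n x'. E w m \<and> E m v"
      using sphere_1_inter_sphere_common_neighbour[OF assms(4,5) \<open>dist E x x' < n\<close> assms(8)] by blast
  qed
qed

end
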